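(* Let $m_x,m_y,m_z\in(0,1)$, $\alpha\in(0,1)$, $c>0$ and $\mu>0$, and let $\rho:[0,\infty)\to[0,1]$ be a decreasing function with $\rho(0)=1$ and $\lim_{w\to\infty}\rho(w)=0$. Consider the discrete-time system on the state space $\{(x,y,z): x\ge 0,\ y\ge 0,\ z>0\}$ $$\begin{aligned} x(t+1)&=(1-m_x)x(t)+\alpha c\,\rho(c\,x(t))\,\frac{y(t)}{y(t)+z(t)}\,x(t),\\ y(t+1)&=(1-m_y)y(t)+(1-\alpha)c\,\rho(c\,x(t))\,\frac{y(t)}{y(t)+z(t)}\,x(t)+c\,\rho(c\,x(t))\,\frac{z(t)}{y(t)+z(t)}\,x(t),\\ z(t+1)&=(1-m_z)z(t)+\mu . \end{aligned}$$ Then the extinction equilibrium $\left(0,0,\dfrac{\mu}{m_z}\right)$ is locally asymptotically stable: it is Lyapunov stable, and there is a neighborhood $U$ of it in the state space such that every trajectory starting in $U$ converges to $\left(0,0,\dfrac{\mu}{m_z}\right)$ as $t\to\infty$.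
   Context: The variables $x,y,z$ are the numbers of adult females, adult males and "supermales" (YY males, whose offspring are all male) of an invasive fish population; $t$ counts life cycles. The mortality rates are $m_i=1-p_iq_i$ with survival probabilities $p_i,q_i\in(0,1)$ in the two life stages, $c$ is the fecundity, $\alpha$ is the fraction of surviving juveniles becoming female, $\rho$ is the density-dependent juvenile survival probability, and $\mu$ is the number of supermales released per life cycle. *)

theory Defs
  imports "HOL-Analysis.Analysis"
begin

definition supermale_step ::
  "real \<Rightarrow> real \<Rightarrow> real \<Rightarrow> real \<Rightarrow> real \<Rightarrow> real \<Rightarrow> (real \<Rightarrow> real)
     \<Rightarrow> real \<times> real \<times> real \<Rightarrow> real \<times> real \<times> real" where
  "supermale_step mx my mz \<alpha> c \<mu> \<rho> s =
     (case s of (x, y, z) \<Rightarrow>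
       ((1 - mx) * x + \<alpha> * c * \<rho> (c * x) * (y / (y + z)) * x,
        (1 - my) * y + (1 - \<alpha>) * c * \<rho> (c * x) * (y / (y + z)) * x
                     + c * \<rho> (c * x) * (z / (y + z)) * x,
        (1 - mz) * z + \<mu>))"

definition supermale_space :: "(real \<times> real \<times> real) set" where
  "supermale_space = {(x, y, z). x \<ge> 0 \<and> y \<ge> 0 \<and> z > 0}"

end

theory Submission
  imports Defs
begin

text \<open>Near the equilibrium the male fraction y/(y+z) is small, so the recruitment of females is
dominated by their mortality, while each female produces at most c males per cycle. Hence
K x + y with K \<ge> 2c/mx contracts by the factor max (1 - mx/4) (1 - my) as long as y \<le> \<eta> z with
4 \<alpha> c \<eta> = mx, and the supermales approach \<mu>/mz geometrically. The function
K x + y + \<bar>z - \<mu>/mz\<bar> is comparable to the distance from the equilibrium, and on a small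
sublevel set, which keeps z \<ge> \<mu>/(2 mz) and hence y \<le> \<eta> z, it contracts by a fixed factor
below 1; so that sublevel set is forward invariant and trajectories in it converge
exponentially.\<close>

lemma dist_Pair_le_add: "dist (a, b) (c, d) \<le> dist a c + dist b d"
  unfolding dist_Pair_Pair by (rule sqrt_sum_squares_le_sum) simp_all

locale supermale_model =
  fixes mx my mz \<alpha> c \<mu> :: real and \<rho> :: "real \<Rightarrow> real"
  assumes mx: "0 < mx" "mx < 1" and my: "0 < my" "my < 1" and mz: "0 < mz" "mz < 1"
    and \<alpha>: "0 < \<alpha>" "\<alpha> < 1" and c: "c > 0" and \<mu>: "\<mu> > 0"
    and \<rho>_bounds: "\<And>w. w \<ge> 0 \<Longrightarrow> 0 \<le> \<rho> w \<and> \<rho> w \<le> 1"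
begin

abbreviation step where "step \<equiv> supermale_step mx my mz \<alpha> c \<mu> \<rho>"

definition zstar :: real where "zstar = \<mu> / mz"

definition K :: real where "K = max 1 (2 * c / mx)"

definition \<eta> :: real where "\<eta> = mx / (4 * \<alpha> * c)"

definition \<theta> :: real where "\<theta> = max (max (1 - mx / 4) (1 - my)) (1 - mz)"

definition lyap :: "real \<times> real \<times> real \<Rightarrow> real" where
  "lyap s = (case s of (x, y, z) \<Rightarrow> K * x + y + \<bar>z - zstar\<bar>)"

definition lyap_level :: real where "lyap_level = min (zstar / 2) (\<eta> * zstar / 2)"

lemma zstar_pos: "zstar > 0"
  using mz \<mu> by (simp add: zstar_def)

lemma K_ge_1: "K \<ge> 1"
  by (simp add: K_def)

lemma two_c_le_K_mx: "2 * c \<le> K * mx"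
proof -
  have "2 * c / mx \<le> K"
    by (simp add: K_def)
  then show ?thesis
    using mx by (simp add: pos_divide_le_eq mult.commute)
qed

lemma \<eta>_pos: "\<eta> > 0"
  using mx \<alpha> c by (simp add: \<eta>_def)

lemma four_\<alpha>_c_\<eta>_eq: "4 * (\<alpha> * c * \<eta>) = mx"
  using \<alpha> c by (simp add: \<eta>_def)

lemma \<theta>_nonneg: "0 \<le> \<theta>" and \<theta>_less_1: "\<theta> < 1"
  using mx my mz by (auto simp: \<theta>_def)

lemma lyap_level_pos: "lyap_level > 0"
  using zstar_pos \<eta>_pos by (simp add: lyap_level_def)

lemma step_mem_supermale_space:
  assumes "s \<in> supermale_space"
  shows "step s \<in> supermale_space"
proof -
  obtain x y z where "s = (x, y, z)" and "x \<ge> 0" "y \<ge> 0" "z > 0"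
    using assms by (auto simp: supermale_space_def)
  moreover have "0 \<le> \<rho> (c * x)"
    using \<rho>_bounds[of "c * x"] c \<open>x \<ge> 0\<close> by simp
  ultimately show ?thesis
    using mx my mz \<alpha> c \<mu>
    by (auto simp: supermale_step_def supermale_space_def
        intro!: add_nonneg_nonneg add_pos_pos add_nonneg_pos mult_nonneg_nonneg)
qed

lemma step_z_error: "snd (snd (step (x, y, z))) - zstar = (1 - mz) * (z - zstar)"
  using mz by (simp add: supermale_step_def zstar_def field_simps)

lemma weighted_step_contracts:
  assumes x: "x \<ge> 0" and y: "y \<ge> 0" and z: "z > 0" and y_small: "y \<le> \<eta> * z"
  shows "K * fst (step (x, y, z)) + fst (snd (step (x, y, z)))
           \<le> max (1 - mx / 4) (1 - my) * (K * x + y)"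
proof -
  define r where "r = \<rho> (c * x)"
  define a where "a = y / (y + z)"
  have r: "0 \<le> r" "r \<le> 1"
    using \<rho>_bounds[of "c * x"] c x by (simp_all add: r_def)
  have a: "0 \<le> a" "a \<le> 1"
    using y z by (simp_all add: a_def)
  have "a \<le> y / z"
    unfolding a_def using y z by (simp add: frac_le)
  also have "\<dots> \<le> \<eta>"
    using y_small z by (simp add: pos_divide_le_eq)
  finally have a_le_\<eta>: "a \<le> \<eta>" .
  have step: "step (x, y, z) =
      ((1 - mx) * x + (\<alpha> * c * r * a) * x,
       (1 - my) * y + ((1 - \<alpha>) * c * r * a * x + c * r * (1 - a) * x),
       (1 - mz) * z + \<mu>)"
    using y z by (simp add: supermale_step_def r_def a_def field_simps)
  have "\<alpha> * c * r * a \<le> \<alpha> * c * 1 * \<eta>"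
    using \<alpha> c r a a_le_\<eta> by (intro mult_mono) auto
  then have females: "\<alpha> * c * r * a \<le> mx / 4"
    using four_\<alpha>_c_\<eta>_eq by simp
  have "r * (1 - \<alpha> * a) \<le> 1 * 1"
    using r a \<alpha> by (intro mult_mono) (auto simp: mult_le_one)
  then have "c * x * (r * (1 - \<alpha> * a)) \<le> c * x"
    using c x by (simp add: mult_left_le)
  then have males: "(1 - \<alpha>) * c * r * a * x + c * r * (1 - a) * x \<le> c * x"
    by (simp add: algebra_simps)
  have "K * ((\<alpha> * c * r * a) * x) \<le> K * (mx / 4 * x)"
    using females K_ge_1 x by (intro mult_left_mono mult_right_mono) auto
  moreover have "c * x \<le> K * mx / 2 * x"
    using two_c_le_K_mx x by (intro mult_right_mono) auto
  ultimately have "K * fst (step (x, y, z)) + fst (snd (step (x, y, z)))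
      \<le> (1 - mx / 4) * (K * x) + (1 - my) * y"
    using males unfolding step by (simp add: algebra_simps)
  also have "\<dots> \<le> max (1 - mx / 4) (1 - my) * (K * x) + max (1 - mx / 4) (1 - my) * y"
    using K_ge_1 x y by (intro add_mono mult_right_mono) auto
  finally show ?thesis
    by (simp add: distrib_left)
qed

lemma lyap_nonneg: "s \<in> supermale_space \<Longrightarrow> 0 \<le> lyap s"
  using K_ge_1 by (auto simp: supermale_space_def lyap_def)

lemma lyap_step:
  assumes s: "s \<in> supermale_space" and small: "lyap s \<le> lyap_level"
  shows "lyap (step s) \<le> \<theta> * lyap s"
proof -
  obtain x y z where s_eq: "s = (x, y, z)" and x: "x \<ge> 0" and y: "y \<ge> 0" and z: "z > 0"
    using s by (auto simp: supermale_space_def)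
  have lyap_s: "lyap s = (K * x + y) + \<bar>z - zstar\<bar>"
    by (simp add: s_eq lyap_def)
  have Kx: "K * x \<ge> 0"
    using K_ge_1 x by simp
  have "lyap s \<le> zstar / 2" "lyap s \<le> \<eta> * zstar / 2"
    using small by (simp_all add: lyap_level_def)
  then have "\<bar>z - zstar\<bar> \<le> zstar / 2" and y_le: "y \<le> \<eta> * zstar / 2"
    using Kx y abs_ge_zero[of "z - zstar"] unfolding lyap_s by linarith+
  then have "zstar / 2 \<le> z"
    by linarith
  then have "\<eta> * zstar / 2 \<le> \<eta> * z"
    using \<eta>_pos by (simp add: mult_left_mono)
  then have "y \<le> \<eta> * z"
    using y_le by linarith
  then have "K * fst (step s) + fst (snd (step s))
      \<le> max (1 - mx / 4) (1 - my) * (K * x + y)"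
    unfolding s_eq by (rule weighted_step_contracts[OF x y z])
  also have "\<dots> \<le> \<theta> * (K * x + y)"
    using Kx y by (intro mult_right_mono) (auto simp: \<theta>_def)
  finally have weighted: "K * fst (step s) + fst (snd (step s)) \<le> \<theta> * (K * x + y)" .
  have "\<bar>snd (snd (step s)) - zstar\<bar> = (1 - mz) * \<bar>z - zstar\<bar>"
    using step_z_error mz by (simp add: s_eq abs_mult)
  also have "\<dots> \<le> \<theta> * \<bar>z - zstar\<bar>"
    by (intro mult_right_mono) (auto simp: \<theta>_def)
  finally have z_error: "\<bar>snd (snd (step s)) - zstar\<bar> \<le> \<theta> * \<bar>z - zstar\<bar>" .
  have "lyap (step s) = (K * fst (step s) + fst (snd (step s))) + \<bar>snd (snd (step s)) - zstar\<bar>"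
    by (simp add: lyap_def split: prod.split)
  also have "\<dots> \<le> \<theta> * lyap s"
    using weighted z_error unfolding lyap_s by (simp add: distrib_left)
  finally show ?thesis .
qed

lemma lyap_iterates:
  assumes s: "s \<in> supermale_space" and small: "lyap s \<le> lyap_level"
  shows "(step ^^ t) s \<in> supermale_space \<and> lyap ((step ^^ t) s) \<le> \<theta> ^ t * lyap s"
proof (induction t)
  case 0
  then show ?case
    using s by simp
next
  case (Suc t)
  let ?s = "(step ^^ t) s"
  have "\<theta> ^ t * lyap s \<le> 1 * lyap s"
    using \<theta>_nonneg \<theta>_less_1 lyap_nonneg[OF s] by (intro mult_right_mono power_le_one) auto
  then have "lyap ?s \<le> lyap_level"
    using Suc.IH small by linarith
  then have "lyap (step ?s) \<le> \<theta> * lyap ?s"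
    using Suc.IH lyap_step by blast
  also have "\<dots> \<le> \<theta> * (\<theta> ^ t * lyap s)"
    using Suc.IH \<theta>_nonneg by (intro mult_left_mono) auto
  finally show ?case
    using Suc.IH step_mem_supermale_space by simp
qed

lemma dist_equilibrium_le_lyap:
  assumes "s \<in> supermale_space"
  shows "dist s (0, 0, zstar) \<le> lyap s"
proof -
  obtain x y z where s: "s = (x, y, z)" and x: "x \<ge> 0" and y: "y \<ge> 0"
    using assms by (auto simp: supermale_space_def)
  have "dist s (0, 0, zstar) \<le> dist x 0 + (dist y 0 + dist z zstar)"
    unfolding s by (rule order.trans[OF dist_Pair_le_add add_left_mono[OF dist_Pair_le_add]])
  also have "\<dots> \<le> lyap s"
    using K_ge_1 x y mult_right_mono[OF K_ge_1 x] by (simp add: s lyap_def dist_real_def)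
  finally show ?thesis .
qed

lemma lyap_le_dist_equilibrium:
  assumes "s \<in> supermale_space"
  shows "lyap s \<le> (K + 2) * dist s (0, 0, zstar)"
proof -
  obtain x y z where s: "s = (x, y, z)" and x: "x \<ge> 0" and y: "y \<ge> 0"
    using assms by (auto simp: supermale_space_def)
  define d where "d = dist s (0, 0, zstar)"
  have "x \<le> d" "y \<le> d" "\<bar>z - zstar\<bar> \<le> d"
    using dist_fst_le[of s "(0, 0, zstar)"] dist_snd_le[of s "(0, 0, zstar)"]
      dist_fst_le[of "snd s" "(0, zstar)"] dist_snd_le[of "snd s" "(0, zstar)"] x y
    by (simp_all add: d_def s dist_real_def)
  moreover have "K * x \<le> K * d"
    using K_ge_1 \<open>x \<le> d\<close> by simp
  ultimately show ?thesis
    unfolding d_def[symmetric] by (simp add: s lyap_def algebra_simps)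
qed

lemma exponential_decay_near_equilibrium:
  assumes "s \<in> supermale_space" and "dist s (0, 0, zstar) \<le> lyap_level / (K + 2)"
  shows "dist ((step ^^ t) s) (0, 0, zstar) \<le> \<theta> ^ t * ((K + 2) * dist s (0, 0, zstar))"
proof -
  have "lyap s \<le> (K + 2) * dist s (0, 0, zstar)"
    using lyap_le_dist_equilibrium[OF assms(1)] .
  also have "\<dots> \<le> lyap_level"
    using assms(2) K_ge_1 by (simp add: pos_le_divide_eq mult.commute)
  finally have small: "lyap s \<le> lyap_level" .
  have "dist ((step ^^ t) s) (0, 0, zstar) \<le> lyap ((step ^^ t) s)"
    using lyap_iterates[OF assms(1) small] by (intro dist_equilibrium_le_lyap) blast
  also have "\<dots> \<le> \<theta> ^ t * lyap s"
    using lyap_iterates[OF assms(1) small] by blast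
  also have "\<dots> \<le> \<theta> ^ t * ((K + 2) * dist s (0, 0, zstar))"
    using lyap_le_dist_equilibrium[OF assms(1)] \<theta>_nonneg by (simp add: mult_left_mono)
  finally show ?thesis .
qed

lemma equilibrium_stable:
  "\<forall>\<epsilon>>0. \<exists>\<delta>>0. \<forall>p\<in>supermale_space. dist p (0, 0, zstar) < \<delta> \<longrightarrow>
     (\<forall>t. dist ((step ^^ t) p) (0, 0, zstar) < \<epsilon>)"
proof (intro allI impI)
  fix \<epsilon> :: real
  assume "\<epsilon> > 0"
  define \<delta> where "\<delta> = min (lyap_level / (K + 2)) (\<epsilon> / (K + 2))"
  have "\<delta> > 0"
    using lyap_level_pos K_ge_1 \<open>\<epsilon> > 0\<close> by (simp add: \<delta>_def)
  moreover have "dist ((step ^^ t) p) (0, 0, zstar) < \<epsilon>"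
    if p: "p \<in> supermale_space" and close: "dist p (0, 0, zstar) < \<delta>" for p t
  proof -
    have "dist ((step ^^ t) p) (0, 0, zstar) \<le> \<theta> ^ t * ((K + 2) * dist p (0, 0, zstar))"
      using close by (intro exponential_decay_near_equilibrium[OF p]) (simp add: \<delta>_def)
    also have "\<dots> \<le> (K + 2) * dist p (0, 0, zstar)"
      using \<theta>_nonneg \<theta>_less_1 K_ge_1 by (intro mult_left_le_one_le power_le_one) auto
    also have "\<dots> < (K + 2) * (\<epsilon> / (K + 2))"
      using close K_ge_1 by (intro mult_strict_left_mono) (auto simp: \<delta>_def)
    also have "\<dots> = \<epsilon>"
      using K_ge_1 by simp
    finally show ?thesis .
  qed
  ultimately show "\<exists>\<delta>>0. \<forall>p\<in>supermale_space. dist p (0, 0, zstar) < \<delta> \<longrightarrow>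
      (\<forall>t. dist ((step ^^ t) p) (0, 0, zstar) < \<epsilon>)"
    by blast
qed

lemma equilibrium_attractive:
  "\<exists>\<delta>>0. \<forall>p\<in>supermale_space. dist p (0, 0, zstar) < \<delta> \<longrightarrow>
     (\<lambda>t. (step ^^ t) p) \<longlonglongrightarrow> (0, 0, zstar)"
proof (intro exI[of _ "lyap_level / (K + 2)"] conjI ballI impI)
  show "lyap_level / (K + 2) > 0"
    using lyap_level_pos K_ge_1 by simp
  fix p
  assume p: "p \<in> supermale_space" and close: "dist p (0, 0, zstar) < lyap_level / (K + 2)"
  have decay: "(\<lambda>t. \<theta> ^ t * ((K + 2) * dist p (0, 0, zstar))) \<longlonglongrightarrow> 0"
    using \<theta>_nonneg \<theta>_less_1 by (intro tendsto_mult_left_zero[OF LIMSEQ_power_zero]) simp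
  have bound: "\<forall>t. norm (dist ((step ^^ t) p) (0, 0, zstar))
      \<le> \<theta> ^ t * ((K + 2) * dist p (0, 0, zstar))"
    using exponential_decay_near_equilibrium[OF p less_imp_le[OF close]] by simp
  have "(\<lambda>t. dist ((step ^^ t) p) (0, 0, zstar)) \<longlonglongrightarrow> 0"
    by (rule Lim_null_comparison[OF always_eventually[OF bound] decay])
  then show "(\<lambda>t. (step ^^ t) p) \<longlonglongrightarrow> (0, 0, zstar)"
    by (rule tendsto_dist_iff[THEN iffD2])
qed

end

theorem mainTheorem2:
  fixes mx my mz \<alpha> c \<mu> :: real and \<rho> :: "real \<Rightarrow> real"
  assumes "0 < mx" "mx < 1" "0 < my" "my < 1" "0 < mz" "mz < 1"
    and "0 < \<alpha>" "\<alpha> < 1" "c > 0" "\<mu> > 0"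
    and "\<And>w. w \<ge> 0 \<Longrightarrow> 0 \<le> \<rho> w \<and> \<rho> w \<le> 1"
    and "\<And>v w. 0 \<le> v \<Longrightarrow> v \<le> w \<Longrightarrow> \<rho> w \<le> \<rho> v"
    and "\<rho> 0 = 1"
    and "(\<rho> \<longlongrightarrow> 0) at_top"
  defines "F \<equiv> supermale_step mx my mz \<alpha> c \<mu> \<rho>"
    and "e \<equiv> (0::real, 0::real, \<mu> / mz)"
  shows "(\<forall>\<epsilon>>0. \<exists>\<delta>>0. \<forall>p\<in>supermale_space. dist p e < \<delta> \<longrightarrow>
            (\<forall>t. dist ((F ^^ t) p) e < \<epsilon>))
       \<and> (\<exists>\<delta>>0. \<forall>p\<in>supermale_space. dist p e < \<delta> \<longrightarrow>
            (\<lambda>t. (F ^^ t) p) \<longlonglongrightarrow> e)"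
proof -
  interpret supermale_model mx my mz \<alpha> c \<mu> \<rho>
    using assms(1-11) by unfold_locales auto
  show ?thesis
    unfolding F_def e_def zstar_def[symmetric]
    using equilibrium_stable equilibrium_attractive by (rule conjI)
qed

end
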